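(* Let $(X,d)$ be a compact metric space. If $X$ admits a conical bicombing, then $X$ admits an $\mathrm{Iso}(X)$-equivariant reversible conical bicombing.
   Context: A bicombing on $(X,d)$ is a map $\sigma\colon X\times X\times[0,1]\to X$ such that each $\sigma_{xy}:=\sigma(x,y,\cdot)$ is a geodesic from $x$ to $y$ ($\sigma_{xy}(0)=x$, $\sigma_{xy}(1)=y$, $d(\sigma_{xy}(s),\sigma_{xy}(t))=|s-t|d(x,y)$); it is conical if $d(\sigma_{xy}(t),\sigma_{x'y'}(t))\le(1-t)d(x,x')+t\,d(y,y')$ for all $x,y,x',y'$, $t\in[0,1]$, and reversible if $\sigma_{xy}(t)=\sigma_{yx}(1-t)$. It is $\mathrm{Iso}(X)$-equivariant if $f(\sigma(x,y,t))=\sigma(f(x),f(y),t)$ for all $(x,y,t)\in X\times X\times[0,1]$ and every isometry $f\colon X\to X$. *)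

theory Defs
  imports "HOL-Analysis.Analysis"
begin

text \<open>Values of sigma outside [0,1] are irrelevant.\<close>
definition bicombing :: "('a::metric_space \<Rightarrow> 'a \<Rightarrow> real \<Rightarrow> 'a) \<Rightarrow> bool" where
  "bicombing \<sigma> \<longleftrightarrow>
     (\<forall>x y. \<sigma> x y 0 = x \<and> \<sigma> x y 1 = y \<and>
        (\<forall>s\<in>{0..1}. \<forall>t\<in>{0..1}. dist (\<sigma> x y s) (\<sigma> x y t) = \<bar>s - t\<bar> * dist x y))"

definition conical_bicombing :: "('a::metric_space \<Rightarrow> 'a \<Rightarrow> real \<Rightarrow> 'a) \<Rightarrow> bool" where
  "conical_bicombing \<sigma> \<longleftrightarrow> bicombing \<sigma> \<and>
     (\<forall>x y x' y'. \<forall>t\<in>{0..1}.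
        dist (\<sigma> x y t) (\<sigma> x' y' t) \<le> (1 - t) * dist x x' + t * dist y y')"

definition reversible_bicombing :: "('a::metric_space \<Rightarrow> 'a \<Rightarrow> real \<Rightarrow> 'a) \<Rightarrow> bool" where
  "reversible_bicombing \<sigma> \<longleftrightarrow> (\<forall>x y. \<forall>t\<in>{0..1}. \<sigma> x y t = \<sigma> y x (1 - t))"

definition isometry :: "('a::metric_space \<Rightarrow> 'a) \<Rightarrow> bool" where
  "isometry f \<longleftrightarrow> bij f \<and> (\<forall>x y. dist (f x) (f y) = dist x y)"

definition iso_equivariant :: "('a::metric_space \<Rightarrow> 'a \<Rightarrow> real \<Rightarrow> 'a) \<Rightarrow> bool" where
  "iso_equivariant \<sigma> \<longleftrightarrow>
     (\<forall>f. isometry f \<longrightarrow> (\<forall>x y. \<forall>t\<in>{0..1}. f (\<sigma> x y t) = \<sigma> (f x) (f y) t))"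

end

theory Submission
  imports Defs
begin

text \<open>
  Conical bicombings, viewed as points of the compact product space of all maps
  \<open>X \<times> X \<times> \<real> \<rightarrow> X\<close>, form a closed set which is preserved by conjugation with isometries,
  by reversal, and by pointwise averaging with the midpoint map of one fixed conical bicombing.
  By Zorn's lemma there is a minimal nonempty closed set \<open>K\<close> stable under these operations.
  Its members agree on \<open>X \<times> X \<times> [0,1]\<close>: otherwise their uniform diameter \<open>D\<close> is positive,
  equicontinuity yields a finite uniform \<open>D/2\<close>-net of \<open>K\<close>, and the iterated midpoint of this
  net lies within uniform distance \<open>r < D\<close> of every member of \<open>K\<close>.  The members of \<open>K\<close> with
  this property form a smaller stable closed set, contradicting minimality.  Hence each member
  of \<open>K\<close> is fixed by conjugation and reversal, that is, it is equivariant and reversible.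
\<close>

lemma lipschitz_path_dist_eq:
  assumes "\<gamma> 0 = x" "\<gamma> 1 = y"
    and lip: "\<And>s t. s \<in> {0..1} \<Longrightarrow> t \<in> {0..1} \<Longrightarrow> dist (\<gamma> s) (\<gamma> t) \<le> \<bar>s - t\<bar> * dist x y"
    and "s \<in> {0..1}" "t \<in> {0..1}"
  shows "dist (\<gamma> s) (\<gamma> t) = \<bar>s - t\<bar> * dist x y"
proof -
  have lower: "(t - s) * dist x y \<le> dist (\<gamma> s) (\<gamma> t)"
    if "s \<in> {0..1}" "t \<in> {0..1}" "s \<le> t" for s t
  proof -
    have "dist x (\<gamma> s) \<le> s * dist x y"
      using lip[of 0 s] that assms(1) by auto
    moreover have "dist (\<gamma> t) y \<le> (1 - t) * dist x y"
      using lip[of t 1] that assms(2) by auto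
    moreover have "dist x y \<le> dist x (\<gamma> s) + dist (\<gamma> s) (\<gamma> t) + dist (\<gamma> t) y"
      using dist_triangle[of x y "\<gamma> s"] dist_triangle[of "\<gamma> s" y "\<gamma> t"] by linarith
    ultimately show ?thesis
      by (simp add: algebra_simps)
  qed
  show ?thesis
    using lip[OF assms(4,5)] lower[OF assms(4,5)] lower[OF assms(5,4)]
    by (cases "s \<le> t") (auto simp: dist_commute)
qed

lemma isometry_dist: "isometry g \<Longrightarrow> dist (g x) (g y) = dist x y"
  unfolding isometry_def by blast

lemma isometry_f_inv_f: "isometry g \<Longrightarrow> g (inv g x) = x"
  unfolding isometry_def by (simp add: bij_is_surj surj_f_inv_f)

lemma isometry_inv_f_f: "isometry g \<Longrightarrow> inv g (g x) = x"
  unfolding isometry_def by (simp add: bij_is_inj)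

lemma isometry_inv: "isometry g \<Longrightarrow> isometry (inv g)"
  unfolding isometry_def by (metis bij_imp_bij_inv bij_is_surj surj_f_inv_f)

lemma isometry_dist_inv: "isometry g \<Longrightarrow> dist (g a) b = dist a (inv g b)"
  by (metis isometry_dist isometry_f_inv_f)

lemma compact_finite_net:
  fixes S :: "'a::metric_space set"
  assumes "compact S" and "0 < \<epsilon>"
  obtains N where "finite N" "N \<subseteq> S" "\<And>x. x \<in> S \<Longrightarrow> \<exists>x'\<in>N. dist x' x < \<epsilon>"
proof -
  obtain N where "finite N" "N \<subseteq> S" "S \<subseteq> (\<Union>x'\<in>N. ball x' \<epsilon>)"
    using seq_compact_imp_totally_bounded[OF compact_imp_seq_compact[OF assms(1)], rule_format, OF assms(2)]
    by (elim exE conjE)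
  then show thesis
    by (intro that) (auto simp: subset_eq)
qed

section \<open>Conical bicombings and conical midpoint maps\<close>

lemma conical_bicombingI:
  assumes "\<And>x y. \<sigma> x y 0 = x" "\<And>x y. \<sigma> x y 1 = y"
    and "\<And>x y s t. s \<in> {0..1} \<Longrightarrow> t \<in> {0..1} \<Longrightarrow> dist (\<sigma> x y s) (\<sigma> x y t) = \<bar>s - t\<bar> * dist x y"
    and "\<And>x y x' y' t. t \<in> {0..1} \<Longrightarrow>
           dist (\<sigma> x y t) (\<sigma> x' y' t) \<le> (1 - t) * dist x x' + t * dist y y'"
  shows "conical_bicombing \<sigma>"
  using assms unfolding conical_bicombing_def bicombing_def by blast

lemma
  assumes "conical_bicombing \<sigma>"
  shows conical_bicombing_0: "\<sigma> x y 0 = x"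
    and conical_bicombing_1: "\<sigma> x y 1 = y"
    and conical_bicombing_geodesic:
      "s \<in> {0..1} \<Longrightarrow> t \<in> {0..1} \<Longrightarrow> dist (\<sigma> x y s) (\<sigma> x y t) = \<bar>s - t\<bar> * dist x y"
    and conical_bicombing_conical:
      "t \<in> {0..1} \<Longrightarrow> dist (\<sigma> x y t) (\<sigma> x' y' t) \<le> (1 - t) * dist x x' + t * dist y y'"
  using assms unfolding conical_bicombing_def bicombing_def by blast+

lemma conical_bicombing_dist_le:
  assumes "conical_bicombing \<sigma>" "s \<in> {0..1}" "t \<in> {0..1}"
  shows "dist (\<sigma> x y s) (\<sigma> x' y' t) \<le> \<bar>s - t\<bar> * dist x y + dist x x' + dist y y'"
proof -
  have "(1 - t) * dist x x' + t * dist y y' \<le> dist x x' + dist y y'"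
    using assms(3) by (intro add_mono) (auto intro: mult_left_le_one_le)
  then show ?thesis
    using dist_triangle[of "\<sigma> x y s" "\<sigma> x' y' t" "\<sigma> x y t"]
      conical_bicombing_geodesic[OF assms, of x y] conical_bicombing_conical[OF assms(1,3), of x y x' y']
    by linarith
qed

definition conical_midpoint :: "('a::metric_space \<Rightarrow> 'a \<Rightarrow> 'a) \<Rightarrow> bool" where
  "conical_midpoint \<mu> \<longleftrightarrow> (\<forall>a. \<mu> a a = a) \<and>
     (\<forall>a b a' b'. dist (\<mu> a b) (\<mu> a' b') \<le> (dist a a' + dist b b') / 2)"

lemma conical_midpoint_halfway:
  assumes "conical_bicombing \<sigma>"
  shows "conical_midpoint (\<lambda>a b. \<sigma> a b (1/2))"
proof -
  have "dist (\<sigma> a a (1/2)) (\<sigma> a a 0) = 0" for a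
    using conical_bicombing_geodesic[OF assms, of "1/2" 0 a a] by simp
  then have "\<sigma> a a (1/2) = a" for a
    using conical_bicombing_0[OF assms] by simp
  moreover have "dist (\<sigma> a b (1/2)) (\<sigma> a' b' (1/2)) \<le> (dist a a' + dist b b') / 2" for a b a' b'
    using conical_bicombing_conical[OF assms, of "1/2" a b a' b'] by simp
  ultimately show ?thesis
    unfolding conical_midpoint_def by blast
qed

lemma conical_midpoint_dist:
  assumes "conical_midpoint \<mu>"
  shows "dist (\<mu> a b) c \<le> (dist a c + dist b c) / 2"
  using assms unfolding conical_midpoint_def by metis

lemma conical_midpoint_foldr_dist:
  assumes \<mu>: "conical_midpoint \<mu>"
    and far: "\<And>z. z \<in> insert a (set zs) \<Longrightarrow> dist z c \<le> D"
    and near: "\<exists>z \<in> insert a (set zs). dist z c \<le> e" and "e \<le> D"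
  shows "dist (foldr \<mu> zs a) c \<le> D - (D - e) / 2 ^ length zs"
  using far near \<open>e \<le> D\<close>
proof (induction zs arbitrary: e)
  case Nil
  then show ?case by simp
next
  case (Cons z zs)
  let ?r = "foldr \<mu> zs a"
  have r_le: "dist ?r c \<le> D"
    using Cons.IH[of D] Cons.prems(1) by auto
  have z_le: "dist z c \<le> D"
    using Cons.prems(1) by simp
  have step: "dist (foldr \<mu> (z # zs) a) c \<le> (dist z c + dist ?r c) / 2"
    using conical_midpoint_dist[OF \<mu>] by simp
  show ?case
  proof (cases "dist z c \<le> e")
    case True
    have "(D - e) / 2 ^ length (z # zs) \<le> (D - e) / 2"
      using Cons.prems(3) by (intro divide_left_mono) auto
    then show ?thesis
      using step True r_le unfolding add_divide_distrib diff_divide_distrib by linarith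
  next
    case False
    define X where "X = (D - e) / 2 ^ length zs"
    have "dist ?r c \<le> D - X"
      using False Cons unfolding X_def by auto
    moreover have "(D - e) / 2 ^ length (z # zs) = X / 2"
      unfolding X_def by simp
    ultimately show ?thesis
      using step z_le unfolding add_divide_distrib by linarith
  qed
qed

section \<open>Operations on bicombings\<close>

definition midpoint_combination ::
    "('a \<Rightarrow> 'a \<Rightarrow> 'a) \<Rightarrow> ('b \<Rightarrow> 'b \<Rightarrow> real \<Rightarrow> 'a) \<Rightarrow> ('b \<Rightarrow> 'b \<Rightarrow> real \<Rightarrow> 'a) \<Rightarrow> 'b \<Rightarrow> 'b \<Rightarrow> real \<Rightarrow> 'a" where
  "midpoint_combination \<mu> \<sigma> \<tau> = (\<lambda>x y t. \<mu> (\<sigma> x y t) (\<tau> x y t))"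

definition conjugate_bicombing :: "('a \<Rightarrow> 'a) \<Rightarrow> ('a \<Rightarrow> 'a \<Rightarrow> real \<Rightarrow> 'a) \<Rightarrow> 'a \<Rightarrow> 'a \<Rightarrow> real \<Rightarrow> 'a" where
  "conjugate_bicombing g \<sigma> = (\<lambda>x y t. g (\<sigma> (inv g x) (inv g y) t))"

definition reverse_bicombing :: "('a \<Rightarrow> 'a \<Rightarrow> real \<Rightarrow> 'b) \<Rightarrow> 'a \<Rightarrow> 'a \<Rightarrow> real \<Rightarrow> 'b" where
  "reverse_bicombing \<sigma> = (\<lambda>x y t. \<sigma> y x (1 - t))"

lemma conical_bicombing_midpoint_combination:
  assumes \<mu>: "conical_midpoint \<mu>" and \<sigma>: "conical_bicombing \<sigma>" and \<tau>: "conical_bicombing \<tau>"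
  shows "conical_bicombing (midpoint_combination \<mu> \<sigma> \<tau>)"
proof -
  let ?\<rho> = "midpoint_combination \<mu> \<sigma> \<tau>"
  have avg: "dist (?\<rho> x y s) (?\<rho> x' y' t)
      \<le> (dist (\<sigma> x y s) (\<sigma> x' y' t) + dist (\<tau> x y s) (\<tau> x' y' t)) / 2" for x y x' y' s t
    using \<mu> unfolding conical_midpoint_def midpoint_combination_def by blast
  have ends: "?\<rho> x y 0 = x" "?\<rho> x y 1 = y" for x y
    using \<mu> conical_bicombing_0[OF \<sigma>] conical_bicombing_0[OF \<tau>]
      conical_bicombing_1[OF \<sigma>] conical_bicombing_1[OF \<tau>]
    unfolding conical_midpoint_def midpoint_combination_def by simp_all
  show ?thesis
  proof (rule conical_bicombingI)
    show "dist (?\<rho> x y s) (?\<rho> x y t) = \<bar>s - t\<bar> * dist x y"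
      if "s \<in> {0..1}" "t \<in> {0..1}" for x y s t
    proof (rule lipschitz_path_dist_eq[where \<gamma> = "?\<rho> x y"])
      show "dist (?\<rho> x y s') (?\<rho> x y t') \<le> \<bar>s' - t'\<bar> * dist x y"
        if "s' \<in> {0..1}" "t' \<in> {0..1}" for s' t'
        using avg[of x y s' x y t'] conical_bicombing_geodesic[OF \<sigma> that, of x y]
          conical_bicombing_geodesic[OF \<tau> that, of x y] unfolding add_divide_distrib by linarith
    qed (use ends that in auto)
    show "dist (?\<rho> x y t) (?\<rho> x' y' t) \<le> (1 - t) * dist x x' + t * dist y y'"
      if "t \<in> {0..1}" for x y x' y' t
      using avg[of x y t x' y' t] conical_bicombing_conical[OF \<sigma> that, of x y x' y']
        conical_bicombing_conical[OF \<tau> that, of x y x' y'] unfolding add_divide_distrib by linarith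
  qed (use ends in auto)
qed

lemma conical_bicombing_conjugate:
  assumes g: "isometry g" and \<sigma>: "conical_bicombing \<sigma>"
  shows "conical_bicombing (conjugate_bicombing g \<sigma>)"
proof (rule conical_bicombingI)
  note simps = conjugate_bicombing_def isometry_dist[OF g] isometry_dist[OF isometry_inv[OF g]]
  show "dist (conjugate_bicombing g \<sigma> x y s) (conjugate_bicombing g \<sigma> x y t) = \<bar>s - t\<bar> * dist x y"
    if "s \<in> {0..1}" "t \<in> {0..1}" for x y s t
    using conical_bicombing_geodesic[OF \<sigma> that, of "inv g x" "inv g y"] by (simp add: simps)
  show "dist (conjugate_bicombing g \<sigma> x y t) (conjugate_bicombing g \<sigma> x' y' t)
      \<le> (1 - t) * dist x x' + t * dist y y'"
    if "t \<in> {0..1}" for x y x' y' t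
    using conical_bicombing_conical[OF \<sigma> that, of "inv g x" "inv g y" "inv g x'" "inv g y'"]
    by (simp add: simps)
qed (simp_all add: conjugate_bicombing_def conical_bicombing_0[OF \<sigma>] conical_bicombing_1[OF \<sigma>]
      isometry_f_inv_f[OF g])

lemma conical_bicombing_reverse:
  assumes \<sigma>: "conical_bicombing \<sigma>"
  shows "conical_bicombing (reverse_bicombing \<sigma>)"
proof (rule conical_bicombingI)
  show "dist (reverse_bicombing \<sigma> x y s) (reverse_bicombing \<sigma> x y t) = \<bar>s - t\<bar> * dist x y"
    if "s \<in> {0..1}" "t \<in> {0..1}" for x y s t
    using that conical_bicombing_geodesic[OF \<sigma>, of "1 - s" "1 - t" y x]
    by (simp add: reverse_bicombing_def dist_commute abs_minus_commute)
  show "dist (reverse_bicombing \<sigma> x y t) (reverse_bicombing \<sigma> x' y' t) \<le> (1 - t) * dist x x' + t * dist y y'"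
    if "t \<in> {0..1}" for x y x' y' t
    using that conical_bicombing_conical[OF \<sigma>, of "1 - t" y x y' x']
    by (simp add: reverse_bicombing_def algebra_simps)
qed (simp_all add: reverse_bicombing_def conical_bicombing_0[OF \<sigma>] conical_bicombing_1[OF \<sigma>])

lemma foldr_midpoint_combination_apply:
  "foldr (midpoint_combination \<mu>) \<sigma>s \<sigma> x y t = foldr \<mu> (map (\<lambda>\<rho>. \<rho> x y t) \<sigma>s) (\<sigma> x y t)"
  by (induction \<sigma>s) (simp_all add: midpoint_combination_def)

section \<open>The space of bicombings\<close>

lemma compact_UNIV_fun:
  assumes "compact (UNIV :: 'a::topological_space set)"
  shows "compact (UNIV :: ('i \<Rightarrow> 'a) set)"
proof -
  have "compact_space (euclidean :: 'a topology)"
    using assms by (simp add: compact_space_def)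
  then have "compact_space (product_topology (\<lambda>i::'i. euclidean :: 'a topology) UNIV)"
    by (simp add: compact_space_product_topology)
  then show ?thesis
    by (simp add: euclidean_product_topology compact_space_def)
qed

lemma continuous_on_apply3:
  "continuous_on UNIV (\<lambda>\<sigma> :: 'a \<Rightarrow> 'b \<Rightarrow> 'c \<Rightarrow> 'd::topological_space. \<sigma> x y t)"
  by (intro continuous_on_compose2[OF continuous_on_product_coordinates, where f = "\<lambda>\<sigma>. \<sigma> x y"]
      continuous_on_compose2[OF continuous_on_product_coordinates, where f = "\<lambda>\<sigma>. \<sigma> x"]
      continuous_on_product_coordinates) auto

lemma closed_conical_bicombings:
  "closed (Collect conical_bicombing :: ('a::metric_space \<Rightarrow> 'a \<Rightarrow> real \<Rightarrow> 'a) set)"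
  unfolding conical_bicombing_def bicombing_def Ball_def
  by (intro closed_Collect_conj closed_Collect_all closed_Collect_imp closed_Collect_eq
      closed_Collect_le continuous_on_dist continuous_on_apply3 continuous_on_const)
    (simp_all add: Collect_const)

definition uniformly_close ::
    "real \<Rightarrow> ('a \<Rightarrow> 'a \<Rightarrow> real \<Rightarrow> 'b::metric_space) \<Rightarrow> ('a \<Rightarrow> 'a \<Rightarrow> real \<Rightarrow> 'b) \<Rightarrow> bool" where
  "uniformly_close r \<sigma> \<tau> \<longleftrightarrow> (\<forall>x y. \<forall>t\<in>{0..1}. dist (\<sigma> x y t) (\<tau> x y t) \<le> r)"

lemma closed_uniformly_close: "closed {\<sigma>. uniformly_close r \<sigma> \<tau>}"
  unfolding uniformly_close_def Ball_def
  by (intro closed_Collect_all closed_Collect_imp closed_Collect_le continuous_on_dist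
      continuous_on_apply3 continuous_on_const) (simp_all add: Collect_const)

lemma uniformly_close_conjugate:
  assumes g: "isometry g" and close: "uniformly_close r \<sigma> (conjugate_bicombing (inv g) \<tau>)"
  shows "uniformly_close r (conjugate_bicombing g \<sigma>) \<tau>"
  unfolding uniformly_close_def
proof (intro allI ballI)
  fix x y and t :: real assume "t \<in> {0..1}"
  then have "dist (\<sigma> (inv g x) (inv g y) t) (conjugate_bicombing (inv g) \<tau> (inv g x) (inv g y) t) \<le> r"
    using close unfolding uniformly_close_def by blast
  moreover have "inv (inv g) = g"
    using g unfolding isometry_def by (simp add: inv_inv_eq)
  ultimately show "dist (conjugate_bicombing g \<sigma> x y t) (\<tau> x y t) \<le> r"
    by (simp add: conjugate_bicombing_def isometry_dist_inv[OF g] isometry_f_inv_f[OF g])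
qed

lemma uniformly_close_reverse:
  assumes "uniformly_close r \<sigma> (reverse_bicombing \<tau>)"
  shows "uniformly_close r (reverse_bicombing \<sigma>) \<tau>"
  unfolding uniformly_close_def
proof (intro allI ballI)
  fix x y and t :: real assume "t \<in> {0..1}"
  then have "dist (\<sigma> y x (1 - t)) (reverse_bicombing \<tau> y x (1 - t)) \<le> r"
    using assms unfolding uniformly_close_def by simp
  then show "dist (reverse_bicombing \<sigma> x y t) (\<tau> x y t) \<le> r"
    by (simp add: reverse_bicombing_def)
qed

lemma uniformly_close_midpoint_combination:
  assumes \<mu>: "conical_midpoint \<mu>"
    and "uniformly_close r \<sigma>\<^sub>1 \<tau>" "uniformly_close r \<sigma>\<^sub>2 \<tau>"
  shows "uniformly_close r (midpoint_combination \<mu> \<sigma>\<^sub>1 \<sigma>\<^sub>2) \<tau>"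
  unfolding uniformly_close_def
proof (intro allI ballI)
  fix x y and t :: real assume "t \<in> {0..1}"
  then have "dist (\<sigma>\<^sub>1 x y t) (\<tau> x y t) \<le> r" "dist (\<sigma>\<^sub>2 x y t) (\<tau> x y t) \<le> r"
    using assms(2,3) unfolding uniformly_close_def by blast+
  then show "dist (midpoint_combination \<mu> \<sigma>\<^sub>1 \<sigma>\<^sub>2 x y t) (\<tau> x y t) \<le> r"
    using conical_midpoint_dist[OF \<mu>, of "\<sigma>\<^sub>1 x y t" "\<sigma>\<^sub>2 x y t" "\<tau> x y t"]
    unfolding midpoint_combination_def add_divide_distrib by linarith
qed

lemma uniformly_close_if_close_on_grid:
  fixes \<sigma> \<tau> :: "'a::metric_space \<Rightarrow> 'a \<Rightarrow> real \<Rightarrow> 'a"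
  assumes \<sigma>: "conical_bicombing \<sigma>" and \<tau>: "conical_bicombing \<tau>"
    and diam: "\<And>x y :: 'a. dist x y \<le> b"
    and N: "\<And>x. \<exists>x'\<in>N. dist x' x < \<epsilon>"
    and T: "T \<subseteq> {0..1}" "\<And>t. t \<in> {0..1} \<Longrightarrow> \<exists>t'\<in>T. dist t' t < \<epsilon>"
    and \<epsilon>: "\<epsilon> * b + 2 * \<epsilon> \<le> \<delta> / 3"
    and grid: "\<And>x y t. x \<in> N \<Longrightarrow> y \<in> N \<Longrightarrow> t \<in> T \<Longrightarrow> dist (\<sigma> x y t) (\<tau> x y t) \<le> \<delta> / 3"
  shows "uniformly_close \<delta> \<sigma> \<tau>"
  unfolding uniformly_close_def
proof (intro allI ballI)
  fix x y and t :: real assume t: "t \<in> {0..1}"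
  obtain x' y' t' where "x' \<in> N" "y' \<in> N" "t' \<in> T"
    and close: "dist x' x < \<epsilon>" "dist y' y < \<epsilon>" "dist t' t < \<epsilon>"
    using N[of x] N[of y] T(2)[OF t] by blast
  have near: "dist (\<rho> x y t) (\<rho> x' y' t') \<le> \<delta> / 3" if "conical_bicombing \<rho>" for \<rho>
  proof -
    have "\<bar>t - t'\<bar> * dist x y \<le> \<epsilon> * b"
      using close(3) diam[of x y] zero_le_dist[of t' t] by (intro mult_mono) (auto simp: dist_real_def)
    then show ?thesis
      using conical_bicombing_dist_le[OF that t, of t' x y x' y'] \<open>t' \<in> T\<close> T(1) \<epsilon> close
        dist_commute[of x x'] dist_commute[of y y'] by auto
  qed
  show "dist (\<sigma> x y t) (\<tau> x y t) \<le> \<delta>"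
    using dist_triangle[of "\<sigma> x y t" "\<tau> x y t" "\<sigma> x' y' t'"]
      dist_triangle[of "\<sigma> x' y' t'" "\<tau> x y t" "\<tau> x' y' t'"] dist_commute[of "\<tau> x y t" "\<tau> x' y' t'"]
      near[OF \<sigma>] near[OF \<tau>] grid[OF \<open>x' \<in> N\<close> \<open>y' \<in> N\<close> \<open>t' \<in> T\<close>]
    by linarith
qed

lemma conical_bicombings_finite_grid:
  assumes X: "compact (UNIV :: 'a::metric_space set)" and "0 < \<delta>"
  obtains N T where "finite N" "finite T"
    "\<And>\<sigma> \<tau> :: 'a \<Rightarrow> 'a \<Rightarrow> real \<Rightarrow> 'a. conical_bicombing \<sigma> \<Longrightarrow> conical_bicombing \<tau> \<Longrightarrow>
      (\<And>x y t. x \<in> N \<Longrightarrow> y \<in> N \<Longrightarrow> t \<in> T \<Longrightarrow> dist (\<sigma> x y t) (\<tau> x y t) \<le> \<delta> / 3) \<Longrightarrow>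
      uniformly_close \<delta> \<sigma> \<tau>"
proof -
  define b where "b = diameter (UNIV :: 'a set)"
  have diam: "dist x y \<le> b" for x y :: 'a
    unfolding b_def using compact_imp_bounded[OF X] by (rule diameter_bounded_bound) auto
  define c where "c = b + 2"
  have "0 < c"
    unfolding c_def using diam[of undefined undefined] by simp
  define \<epsilon> where "\<epsilon> = \<delta> / 3 / c"
  have "0 < \<epsilon>"
    unfolding \<epsilon>_def using \<open>0 < \<delta>\<close> \<open>0 < c\<close> by simp
  have "\<epsilon> * b + 2 * \<epsilon> = \<epsilon> * c"
    unfolding c_def by (simp add: algebra_simps)
  also have "\<dots> = \<delta> / 3"
    unfolding \<epsilon>_def using \<open>0 < c\<close> by simp
  finally have \<epsilon>: "\<epsilon> * b + 2 * \<epsilon> \<le> \<delta> / 3"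
    by simp
  obtain N :: "'a set" where N: "finite N" "\<And>x. \<exists>x'\<in>N. dist x' x < \<epsilon>"
    using compact_finite_net[OF X \<open>0 < \<epsilon>\<close>] by (metis UNIV_I)
  obtain T :: "real set" where T: "finite T" "T \<subseteq> {0..1}" "\<And>t. t \<in> {0..1} \<Longrightarrow> \<exists>t'\<in>T. dist t' t < \<epsilon>"
    using compact_finite_net[OF compact_Icc[of 0 1] \<open>0 < \<epsilon>\<close>] by blast
  show thesis
    using uniformly_close_if_close_on_grid[OF _ _ diam N(2) T(2,3) \<epsilon>] by (rule that[OF N(1) T(1)])
qed

lemma conical_bicombings_finite_net:
  fixes K :: "('a::metric_space \<Rightarrow> 'a \<Rightarrow> real \<Rightarrow> 'a) set"
  assumes X: "compact (UNIV :: 'a set)"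
    and K: "compact K" "K \<subseteq> Collect conical_bicombing" and "0 < \<delta>"
  obtains C where "finite C" "C \<subseteq> K" "\<And>\<tau>. \<tau> \<in> K \<Longrightarrow> \<exists>\<sigma>\<in>C. uniformly_close \<delta> \<sigma> \<tau>"
proof -
  obtain N T where NT: "finite N" "finite T"
    and grid: "\<And>\<sigma> \<tau> :: 'a \<Rightarrow> 'a \<Rightarrow> real \<Rightarrow> 'a. conical_bicombing \<sigma> \<Longrightarrow> conical_bicombing \<tau> \<Longrightarrow>
      (\<And>x y t. x \<in> N \<Longrightarrow> y \<in> N \<Longrightarrow> t \<in> T \<Longrightarrow> dist (\<sigma> x y t) (\<tau> x y t) \<le> \<delta> / 3) \<Longrightarrow>
      uniformly_close \<delta> \<sigma> \<tau>"
    using conical_bicombings_finite_grid[OF X \<open>0 < \<delta>\<close>] by blast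
  define U where "U \<sigma> = (\<Inter>x\<in>N. \<Inter>y\<in>N. \<Inter>t\<in>T. {\<tau>. dist (\<sigma> x y t) (\<tau> x y t) < \<delta> / 3})"
    for \<sigma> :: "'a \<Rightarrow> 'a \<Rightarrow> real \<Rightarrow> 'a"
  have "open (U \<sigma>)" for \<sigma>
    unfolding U_def using NT
    by (intro open_INT ballI open_Collect_less continuous_on_dist continuous_on_apply3 continuous_on_const)
  moreover have "K \<subseteq> (\<Union>\<sigma>\<in>K. U \<sigma>)"
    using \<open>0 < \<delta>\<close> unfolding U_def by auto
  ultimately obtain C where C: "C \<subseteq> K" "finite C" "K \<subseteq> (\<Union>\<sigma>\<in>C. U \<sigma>)"
    using compactE_image[OF K(1), of K U] by blast
  have "\<exists>\<sigma>\<in>C. uniformly_close \<delta> \<sigma> \<tau>" if "\<tau> \<in> K" for \<tau>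
  proof -
    obtain \<sigma> where "\<sigma> \<in> C" "\<tau> \<in> U \<sigma>"
      using C(3) \<open>\<tau> \<in> K\<close> by blast
    moreover have "dist (\<sigma> x y t) (\<tau> x y t) \<le> \<delta> / 3" if "x \<in> N" "y \<in> N" "t \<in> T" for x y t
      using \<open>\<tau> \<in> U \<sigma>\<close> that unfolding U_def by (blast intro: less_imp_le)
    ultimately show ?thesis
      using C(1) K(2) \<open>\<tau> \<in> K\<close> grid[of \<sigma> \<tau>] by blast
  qed
  then show thesis
    using that C(1,2) by blast
qed

lemma midpoint_closed_bicombings_nondiametral:
  fixes K :: "('a::metric_space \<Rightarrow> 'a \<Rightarrow> real \<Rightarrow> 'a) set"
  assumes X: "compact (UNIV :: 'a set)"
    and K: "compact K" "K \<subseteq> Collect conical_bicombing" "K \<noteq> {}"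
    and \<mu>: "conical_midpoint \<mu>"
    and mid: "\<And>\<sigma> \<tau>. \<sigma> \<in> K \<Longrightarrow> \<tau> \<in> K \<Longrightarrow> midpoint_combination \<mu> \<sigma> \<tau> \<in> K"
    and diam: "\<And>\<sigma> \<tau>. \<sigma> \<in> K \<Longrightarrow> \<tau> \<in> K \<Longrightarrow> uniformly_close D \<sigma> \<tau>" and "0 < D"
  obtains z r where "z \<in> K" "r < D" "\<And>\<tau>. \<tau> \<in> K \<Longrightarrow> uniformly_close r z \<tau>"
proof -
  obtain C where C: "finite C" "C \<subseteq> K" "\<And>\<tau>. \<tau> \<in> K \<Longrightarrow> \<exists>\<sigma>\<in>C. uniformly_close (D / 2) \<sigma> \<tau>"
    using conical_bicombings_finite_net[OF X K(1,2), of "D / 2"] \<open>0 < D\<close> by auto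
  obtain \<sigma>s where \<sigma>s: "set \<sigma>s = C"
    using finite_list[OF C(1)] by blast
  obtain \<sigma>\<^sub>0 where \<sigma>\<^sub>0: "\<sigma>\<^sub>0 \<in> K"
    using K(3) by blast
  define z where "z = foldr (midpoint_combination \<mu>) \<sigma>s \<sigma>\<^sub>0"
  define r where "r = D - (D - D / 2) / 2 ^ length \<sigma>s"
  have "set \<sigma>s \<subseteq> K"
    using \<sigma>s C(2) by simp
  then have "z \<in> K"
    unfolding z_def by (induction \<sigma>s) (auto intro: mid \<sigma>\<^sub>0)
  moreover have "r < D"
    unfolding r_def using \<open>0 < D\<close> by simp
  moreover have "uniformly_close r z \<tau>" if "\<tau> \<in> K" for \<tau>
    unfolding uniformly_close_def
  proof (intro allI ballI)
    fix x y and t :: real assume t: "t \<in> {0..1}"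
    obtain \<sigma> where \<sigma>: "\<sigma> \<in> set \<sigma>s" "uniformly_close (D / 2) \<sigma> \<tau>"
      using C(3)[OF \<open>\<tau> \<in> K\<close>] \<sigma>s by blast
    have near: "dist (\<sigma> x y t) (\<tau> x y t) \<le> D / 2"
      using \<sigma>(2) t unfolding uniformly_close_def by blast
    let ?ps = "map (\<lambda>\<rho>. \<rho> x y t) \<sigma>s"
    have "dist p (\<tau> x y t) \<le> D" if "p \<in> insert (\<sigma>\<^sub>0 x y t) (set ?ps)" for p
      using that \<sigma>\<^sub>0 \<open>set \<sigma>s \<subseteq> K\<close> \<open>\<tau> \<in> K\<close> diam t unfolding uniformly_close_def by auto
    moreover have "\<exists>p \<in> insert (\<sigma>\<^sub>0 x y t) (set ?ps). dist p (\<tau> x y t) \<le> D / 2"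
      using \<sigma>(1) near by auto
    ultimately have "dist (foldr \<mu> ?ps (\<sigma>\<^sub>0 x y t)) (\<tau> x y t) \<le> D - (D - D / 2) / 2 ^ length ?ps"
      using \<open>0 < D\<close> by (intro conical_midpoint_foldr_dist[OF \<mu>]) auto
    then show "dist (z x y t) (\<tau> x y t) \<le> r"
      unfolding z_def r_def foldr_midpoint_combination_apply by simp
  qed
  ultimately show thesis
    using that by blast
qed

lemma bicombings_uniform_diameter:
  fixes K :: "('a \<Rightarrow> 'a \<Rightarrow> real \<Rightarrow> 'b::metric_space) set"
  assumes "bounded (UNIV :: 'b set)" and "K \<noteq> {}"
  obtains D where "\<And>\<sigma> \<tau>. \<sigma> \<in> K \<Longrightarrow> \<tau> \<in> K \<Longrightarrow> uniformly_close D \<sigma> \<tau>"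
    and "\<And>r. (\<And>\<sigma> \<tau>. \<sigma> \<in> K \<Longrightarrow> \<tau> \<in> K \<Longrightarrow> uniformly_close r \<sigma> \<tau>) \<Longrightarrow> D \<le> r"
proof
  define dists where "dists = {dist (\<sigma> x y t) (\<tau> x y t) |\<sigma> \<tau> x y t.
    \<sigma> \<in> K \<and> \<tau> \<in> K \<and> t \<in> {0..1}}"
  have mem: "dist (\<sigma> x y t) (\<tau> x y t) \<in> dists"
    if "\<sigma> \<in> K" "\<tau> \<in> K" "t \<in> {0..1}" for \<sigma> \<tau> x y t
    unfolding dists_def using that by blast
  have "bdd_above dists"
    unfolding dists_def
    by (rule bdd_aboveI[where M = "diameter (UNIV :: 'b set)"])
      (auto intro: diameter_bounded_bound[OF assms(1)])
  then show "uniformly_close (Sup dists) \<sigma> \<tau>" if "\<sigma> \<in> K" "\<tau> \<in> K" for \<sigma> \<tau>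
    unfolding uniformly_close_def using that by (blast intro: cSup_upper mem)
  show "Sup dists \<le> r" if "\<And>\<sigma> \<tau>. \<sigma> \<in> K \<Longrightarrow> \<tau> \<in> K \<Longrightarrow> uniformly_close r \<sigma> \<tau>" for r
  proof (rule cSup_least)
    obtain \<sigma> where "\<sigma> \<in> K"
      using assms(2) by blast
    then show "dists \<noteq> {}"
      using mem[of \<sigma> \<sigma> 0] by auto
    show "d \<le> r" if "d \<in> dists" for d
      using that \<open>\<And>\<sigma> \<tau>. \<sigma> \<in> K \<Longrightarrow> \<tau> \<in> K \<Longrightarrow> uniformly_close r \<sigma> \<tau>\<close>
      unfolding dists_def uniformly_close_def by blast
  qed
qed

section \<open>Minimal invariant families\<close>

lemma subset_Zorn_dual:
  assumes "\<And>\<C>. subset.chain \<A> \<C> \<Longrightarrow> \<exists>L\<in>\<A>. \<forall>X\<in>\<C>. L \<subseteq> X"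
  shows "\<exists>M\<in>\<A>. \<forall>X\<in>\<A>. X \<subseteq> M \<longrightarrow> X = M"
proof (rule predicate_Zorn)
  show "partial_order_on \<A> (relation_of (\<lambda>X Y. Y \<subseteq> X) \<A>)"
    by (rule partial_order_on_relation_ofI) auto
  fix \<C> assume "\<C> \<in> Chains (relation_of (\<lambda>X Y. Y \<subseteq> X) \<A>)"
  then have "subset.chain \<A> \<C>"
    unfolding Chains_def relation_of_def subset_chain_def by auto
  then show "\<exists>L\<in>\<A>. \<forall>X\<in>\<C>. L \<subseteq> X"
    by (rule assms)
qed

lemma compact_UNIV_chain_Inter_nonempty:
  fixes \<C> :: "'a::topological_space set set"
  assumes "compact (UNIV :: 'a set)" and "\<C> \<noteq> {}"
    and closed: "\<And>T. T \<in> \<C> \<Longrightarrow> closed T" and nonempty: "\<And>T. T \<in> \<C> \<Longrightarrow> T \<noteq> {}"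
    and chain: "\<And>X Y. X \<in> \<C> \<Longrightarrow> Y \<in> \<C> \<Longrightarrow> X \<subseteq> Y \<or> Y \<subseteq> X"
  shows "\<Inter>\<C> \<noteq> {}"
proof -
  have "UNIV \<inter> \<Inter>\<C> \<noteq> {}"
  proof (rule compact_imp_fip[OF assms(1) closed])
    show "UNIV \<inter> \<Inter>\<F> \<noteq> {}" if "finite \<F>" "\<F> \<subseteq> \<C>" for \<F>
    proof (cases "\<F> = {}")
      case False
      have "subset.chain \<C> \<F>"
        using chain \<open>\<F> \<subseteq> \<C>\<close> unfolding subset_chain_def by blast
      then have "\<Inter>\<F> \<in> \<F>"
        by (rule Inter_in_chain[OF \<open>finite \<F>\<close> False])
      then show ?thesis
        using \<open>\<F> \<subseteq> \<C>\<close> nonempty by auto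
    qed simp
  qed
  then show ?thesis
    by simp
qed

lemma compact_UNIV_minimal_closed:
  fixes S :: "'a::topological_space set"
  assumes "compact (UNIV :: 'a set)"
    and S: "closed S" "S \<noteq> {}" "P S"
    and P_Inter: "\<And>\<F>. \<F> \<noteq> {} \<Longrightarrow> (\<And>T. T \<in> \<F> \<Longrightarrow> P T) \<Longrightarrow> P (\<Inter>\<F>)"
  obtains M where "closed M" "M \<noteq> {}" "P M"
    "\<And>T. closed T \<Longrightarrow> T \<noteq> {} \<Longrightarrow> P T \<Longrightarrow> T \<subseteq> M \<Longrightarrow> T = M"
proof -
  let ?\<A> = "{T. closed T \<and> T \<noteq> {} \<and> P T}"
  have "\<exists>L\<in>?\<A>. \<forall>X\<in>\<C>. L \<subseteq> X" if \<C>: "subset.chain ?\<A> \<C>" for \<C>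
  proof (cases "\<C> = {}")
    case True
    show ?thesis
      using True S by (intro bexI[of _ S]) auto
  next
    case False
    have \<C>_sub: "\<C> \<subseteq> ?\<A>" and comparable: "\<And>X Y. X \<in> \<C> \<Longrightarrow> Y \<in> \<C> \<Longrightarrow> X \<subseteq> Y \<or> Y \<subseteq> X"
      using \<C> by (auto simp: subset_chain_def)
    have "\<Inter>\<C> \<noteq> {}"
      using \<C>_sub comparable by (intro compact_UNIV_chain_Inter_nonempty[OF assms(1) False]) auto
    moreover have "closed (\<Inter>\<C>)"
      using \<C>_sub by (intro closed_Inter) auto
    moreover have "P (\<Inter>\<C>)"
      using \<C>_sub by (intro P_Inter[OF False]) auto
    ultimately show ?thesis
      by (intro bexI[of _ "\<Inter>\<C>"]) auto
  qed
  from subset_Zorn_dual[OF this] obtain M where "M \<in> ?\<A>" "\<forall>X\<in>?\<A>. X \<subseteq> M \<longrightarrow> X = M"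
    by blast
  then show thesis
    by (intro that) auto
qed

definition invariant_bicombings ::
    "('a::metric_space \<Rightarrow> 'a \<Rightarrow> 'a) \<Rightarrow> ('a \<Rightarrow> 'a \<Rightarrow> real \<Rightarrow> 'a) set \<Rightarrow> bool" where
  "invariant_bicombings \<mu> K \<longleftrightarrow> K \<subseteq> Collect conical_bicombing \<and>
     (\<forall>g. isometry g \<longrightarrow> (\<forall>\<sigma>\<in>K. conjugate_bicombing g \<sigma> \<in> K)) \<and>
     (\<forall>\<sigma>\<in>K. reverse_bicombing \<sigma> \<in> K) \<and>
     (\<forall>\<sigma>\<in>K. \<forall>\<tau>\<in>K. midpoint_combination \<mu> \<sigma> \<tau> \<in> K)"

lemma
  assumes "invariant_bicombings \<mu> K"
  shows invariant_bicombings_conical: "\<sigma> \<in> K \<Longrightarrow> conical_bicombing \<sigma>"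
    and invariant_bicombings_conjugate: "isometry g \<Longrightarrow> \<sigma> \<in> K \<Longrightarrow> conjugate_bicombing g \<sigma> \<in> K"
    and invariant_bicombings_reverse: "\<sigma> \<in> K \<Longrightarrow> reverse_bicombing \<sigma> \<in> K"
    and invariant_bicombings_midpoint:
      "\<sigma> \<in> K \<Longrightarrow> \<tau> \<in> K \<Longrightarrow> midpoint_combination \<mu> \<sigma> \<tau> \<in> K"
  using assms unfolding invariant_bicombings_def by blast+

lemma invariant_bicombings_Inter:
  assumes "\<F> \<noteq> {}" and inv: "\<And>K. K \<in> \<F> \<Longrightarrow> invariant_bicombings \<mu> K"
  shows "invariant_bicombings \<mu> (\<Inter>\<F>)"
  unfolding invariant_bicombings_def
proof (intro conjI allI impI ballI InterI)
  obtain K where "K \<in> \<F>"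
    using assms(1) by blast
  then show "\<Inter>\<F> \<subseteq> Collect conical_bicombing"
    using inv[OF \<open>K \<in> \<F>\<close>] unfolding invariant_bicombings_def by blast
  fix K assume "K \<in> \<F>"
  note K = inv[OF this, unfolded invariant_bicombings_def]
  show "conjugate_bicombing g \<sigma> \<in> K" if "isometry g" "\<sigma> \<in> \<Inter>\<F>" for g \<sigma>
    using K that \<open>K \<in> \<F>\<close> by blast
  show "reverse_bicombing \<sigma> \<in> K" if "\<sigma> \<in> \<Inter>\<F>" for \<sigma>
    using K that \<open>K \<in> \<F>\<close> by blast
  show "midpoint_combination \<mu> \<sigma> \<tau> \<in> K" if "\<sigma> \<in> \<Inter>\<F>" "\<tau> \<in> \<Inter>\<F>" for \<sigma> \<tau>
    using K that \<open>K \<in> \<F>\<close> by blast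
qed

lemma invariant_conical_bicombings:
  "conical_midpoint \<mu> \<Longrightarrow> invariant_bicombings \<mu> (Collect conical_bicombing)"
  by (simp add: invariant_bicombings_def conical_bicombing_conjugate conical_bicombing_reverse
      conical_bicombing_midpoint_combination)

definition uniform_centers ::
    "real \<Rightarrow> ('a \<Rightarrow> 'a \<Rightarrow> real \<Rightarrow> 'b::metric_space) set \<Rightarrow> ('a \<Rightarrow> 'a \<Rightarrow> real \<Rightarrow> 'b) set" where
  "uniform_centers r K = {\<sigma>\<in>K. \<forall>\<tau>\<in>K. uniformly_close r \<sigma> \<tau>}"

lemma closed_uniform_centers:
  assumes "closed K"
  shows "closed (uniform_centers r K)"
proof -
  have "uniform_centers r K = K \<inter> (\<Inter>\<tau>\<in>K. {\<sigma>. uniformly_close r \<sigma> \<tau>})"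
    unfolding uniform_centers_def by auto
  then show ?thesis
    by (simp only:) (intro closed_Int closed_INT ballI closed_uniformly_close assms)
qed

lemma invariant_bicombings_uniform_centers:
  assumes \<mu>: "conical_midpoint \<mu>" and K: "invariant_bicombings \<mu> K"
  shows "invariant_bicombings \<mu> (uniform_centers r K)"
proof -
  let ?U = "uniform_centers r K"
  note conj = invariant_bicombings_conjugate[OF K]
    and rev = invariant_bicombings_reverse[OF K]
    and mid = invariant_bicombings_midpoint[OF K]
  have "?U \<subseteq> Collect conical_bicombing"
    using K unfolding invariant_bicombings_def uniform_centers_def by blast
  moreover have "conjugate_bicombing g \<sigma> \<in> ?U" if g: "isometry g" and "\<sigma> \<in> ?U" for g \<sigma>
  proof -
    have "uniformly_close r (conjugate_bicombing g \<sigma>) \<tau>" if "\<tau> \<in> K" for \<tau>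
      using \<open>\<sigma> \<in> ?U\<close> conj[OF isometry_inv[OF g] that] uniformly_close_conjugate[OF g]
      unfolding uniform_centers_def by blast
    then show ?thesis
      using conj[OF g] \<open>\<sigma> \<in> ?U\<close> unfolding uniform_centers_def by blast
  qed
  moreover have "reverse_bicombing \<sigma> \<in> ?U" if "\<sigma> \<in> ?U" for \<sigma>
    using that rev uniformly_close_reverse unfolding uniform_centers_def by blast
  moreover have "midpoint_combination \<mu> \<sigma> \<tau> \<in> ?U" if "\<sigma> \<in> ?U" "\<tau> \<in> ?U" for \<sigma> \<tau>
    using that mid uniformly_close_midpoint_combination[OF \<mu>] unfolding uniform_centers_def by blast
  ultimately show ?thesis
    unfolding invariant_bicombings_def by blast
qed

lemma minimal_invariant_bicombings_agree:
  fixes K :: "('a::metric_space \<Rightarrow> 'a \<Rightarrow> real \<Rightarrow> 'a) set"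
  assumes X: "compact (UNIV :: 'a set)" and \<mu>: "conical_midpoint \<mu>"
    and K: "closed K" "K \<noteq> {}" "invariant_bicombings \<mu> K"
    and minimal: "\<And>L. closed L \<Longrightarrow> L \<noteq> {} \<Longrightarrow> invariant_bicombings \<mu> L \<Longrightarrow> L \<subseteq> K \<Longrightarrow> L = K"
    and "\<sigma> \<in> K" "\<tau> \<in> K" "t \<in> {0..1}"
  shows "\<sigma> x y t = \<tau> x y t"
proof (rule ccontr)
  assume differ: "\<sigma> x y t \<noteq> \<tau> x y t"
  obtain D where D_close: "\<And>\<sigma> \<tau>. \<sigma> \<in> K \<Longrightarrow> \<tau> \<in> K \<Longrightarrow> uniformly_close D \<sigma> \<tau>"
    and D_least: "\<And>r. (\<And>\<sigma> \<tau>. \<sigma> \<in> K \<Longrightarrow> \<tau> \<in> K \<Longrightarrow> uniformly_close r \<sigma> \<tau>) \<Longrightarrow> D \<le> r"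
    using bicombings_uniform_diameter[OF compact_imp_bounded[OF X] K(2)] by blast
  have "0 < D"
    using D_close[OF \<open>\<sigma> \<in> K\<close> \<open>\<tau> \<in> K\<close>] \<open>t \<in> {0..1}\<close> differ unfolding uniformly_close_def
    by (metis zero_less_dist_iff order_less_le_trans)
  have "compact K"
    using compact_Int_closed[OF compact_UNIV_fun[OF compact_UNIV_fun[OF compact_UNIV_fun[OF X]]] K(1)]
    by simp
  moreover have "K \<subseteq> Collect conical_bicombing"
    using invariant_bicombings_conical[OF K(3)] by blast
  ultimately obtain z r where z: "z \<in> K" "r < D" "\<And>\<tau>. \<tau> \<in> K \<Longrightarrow> uniformly_close r z \<tau>"
    using midpoint_closed_bicombings_nondiametral[OF X _ _ K(2) \<mu> invariant_bicombings_midpoint[OF K(3)]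
        D_close \<open>0 < D\<close>] by blast
  have "uniform_centers r K = K"
  proof (rule minimal)
    show "closed (uniform_centers r K)"
      using K(1) by (rule closed_uniform_centers)
    show "uniform_centers r K \<noteq> {}"
      using z unfolding uniform_centers_def by blast
    show "invariant_bicombings \<mu> (uniform_centers r K)"
      using \<mu> K(3) by (rule invariant_bicombings_uniform_centers)
  qed (auto simp: uniform_centers_def)
  then have "D \<le> r"
    by (intro D_least) (auto simp: uniform_centers_def)
  then show False
    using \<open>r < D\<close> by simp
qed

lemma minimal_invariant_bicombings_reversible_equivariant:
  fixes K :: "('a::metric_space \<Rightarrow> 'a \<Rightarrow> real \<Rightarrow> 'a) set"
  assumes X: "compact (UNIV :: 'a set)" and \<mu>: "conical_midpoint \<mu>"
    and K: "closed K" "K \<noteq> {}" "invariant_bicombings \<mu> K"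
    and minimal: "\<And>L. closed L \<Longrightarrow> L \<noteq> {} \<Longrightarrow> invariant_bicombings \<mu> L \<Longrightarrow> L \<subseteq> K \<Longrightarrow> L = K"
    and \<sigma>: "\<sigma> \<in> K"
  shows "reversible_bicombing \<sigma>" and "iso_equivariant \<sigma>"
proof -
  have agree: "\<rho> x y t = \<sigma> x y t" if "\<rho> \<in> K" "t \<in> {0..1}" for \<rho> x y t
    using X \<mu> K minimal that(1) \<sigma> that(2) by (rule minimal_invariant_bicombings_agree)
  show "reversible_bicombing \<sigma>"
    unfolding reversible_bicombing_def
    using agree[OF invariant_bicombings_reverse[OF K(3) \<sigma>]] by (simp add: reverse_bicombing_def)
  show "iso_equivariant \<sigma>"
    unfolding iso_equivariant_def
  proof (intro allI impI ballI)
    fix f :: "'a \<Rightarrow> 'a" and x y and t :: real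
    assume "isometry f" "t \<in> {0..1}"
    then show "f (\<sigma> x y t) = \<sigma> (f x) (f y) t"
      using agree[OF invariant_bicombings_conjugate[OF K(3) _ \<sigma>] \<open>t \<in> {0..1}\<close>, where x = "f x" and y = "f y"]
      by (simp add: conjugate_bicombing_def isometry_inv_f_f)
  qed
qed

lemma exists_minimal_invariant_bicombings:
  fixes \<sigma> :: "'a::metric_space \<Rightarrow> 'a \<Rightarrow> real \<Rightarrow> 'a"
  assumes X: "compact (UNIV :: 'a set)" and \<mu>: "conical_midpoint \<mu>" and \<sigma>: "conical_bicombing \<sigma>"
  obtains K :: "('a \<Rightarrow> 'a \<Rightarrow> real \<Rightarrow> 'a) set"
    where "closed K" "K \<noteq> {}" "invariant_bicombings \<mu> K"
      "\<And>L. closed L \<Longrightarrow> L \<noteq> {} \<Longrightarrow> invariant_bicombings \<mu> L \<Longrightarrow> L \<subseteq> K \<Longrightarrow> L = K"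
proof -
  have compact: "compact (UNIV :: ('a \<Rightarrow> 'a \<Rightarrow> real \<Rightarrow> 'a) set)"
    using compact_UNIV_fun[OF compact_UNIV_fun[OF compact_UNIV_fun[OF X]]] .
  have nonempty: "Collect conical_bicombing \<noteq> ({} :: ('a \<Rightarrow> 'a \<Rightarrow> real \<Rightarrow> 'a) set)"
    using \<sigma> by blast
  show thesis
    using compact_UNIV_minimal_closed[OF compact closed_conical_bicombings nonempty
        invariant_conical_bicombings[OF \<mu>] invariant_bicombings_Inter] that by blast
qed

theorem lemma4p5:
  assumes "compact (UNIV :: 'a::metric_space set)"
    and "\<exists>\<sigma> :: 'a \<Rightarrow> 'a \<Rightarrow> real \<Rightarrow> 'a. conical_bicombing \<sigma>"
  shows "\<exists>\<sigma> :: 'a \<Rightarrow> 'a \<Rightarrow> real \<Rightarrow> 'a.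
           conical_bicombing \<sigma> \<and> reversible_bicombing \<sigma> \<and> iso_equivariant \<sigma>"
proof -
  obtain \<sigma>\<^sub>0 :: "'a \<Rightarrow> 'a \<Rightarrow> real \<Rightarrow> 'a" where \<sigma>\<^sub>0: "conical_bicombing \<sigma>\<^sub>0"
    using assms(2) by blast
  define \<mu> where "\<mu> = (\<lambda>a b. \<sigma>\<^sub>0 a b (1/2))"
  have \<mu>: "conical_midpoint \<mu>"
    unfolding \<mu>_def using \<sigma>\<^sub>0 by (rule conical_midpoint_halfway)
  obtain K where K: "closed K" "K \<noteq> {}" "invariant_bicombings \<mu> K"
    and minimal: "\<And>L. closed L \<Longrightarrow> L \<noteq> {} \<Longrightarrow> invariant_bicombings \<mu> L \<Longrightarrow> L \<subseteq> K \<Longrightarrow> L = K"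
    using exists_minimal_invariant_bicombings[OF assms(1) \<mu> \<sigma>\<^sub>0] by blast
  obtain \<sigma> where \<sigma>: "\<sigma> \<in> K"
    using K(2) by blast
  have "conical_bicombing \<sigma>"
    using invariant_bicombings_conical[OF K(3) \<sigma>] .
  moreover have "reversible_bicombing \<sigma>" "iso_equivariant \<sigma>"
    using minimal_invariant_bicombings_reversible_equivariant[OF assms(1) \<mu> K minimal \<sigma>] by blast+
  ultimately show ?thesis
    by blast
qed

end
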